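(* Let $Q$ be a $3$-divisible Moufang loop and let $X$ be a $2$-divisible normal subloop of $Q$ that is a commutative group. Then the congruence $\{aX:a\in Q\}$ on $Q$ induced by $X$ is an abelian congruence of $Q$.
   Context: A loop is a magma $(Q,\cdot,1)$ with identity in which all left and right translations are bijections; it is Moufang if it satisfies $xy\cdot zx=(x\cdot yz)x$ for all $x,y,z$ (Moufang loops are power associative). A power associative loop is $d$-divisible if the map $x\mapsto x^d$ is surjective. A subloop is normal if it is the kernel of a loop homomorphism. For a normal subloop $X$ of $Q$, the induced congruence has classes $aX$; it is abelian if its Freese–McKenzie commutator with itself is trivial; equivalently, $Q$ is isomorphic to an abelian extension of $X$ by $Q/X$: a loop on $Q/X\times X$ with $(r,x)(s,y)=(rs,\varphi_{r,s}(x)+\psi_{r,s}(y)+\theta_{r,s})$, $\varphi_{r,s},\psi_{r,s}\in\mathrm{Aut}(X)$, $\theta_{r,s}\in X$, $\varphi_{r,1}=\mathrm{id}=\psi_{1,r}$, $\theta_{1,r}=0=\theta_{r,1}$. *)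

theory Defs
  imports Main
begin

definition is_loop :: "('a \<Rightarrow> 'a \<Rightarrow> 'a) \<Rightarrow> 'a \<Rightarrow> bool" where
  "is_loop m e \<longleftrightarrow> (\<forall>x. m e x = x \<and> m x e = x)
     \<and> (\<forall>a. bij (\<lambda>x. m a x)) \<and> (\<forall>a. bij (\<lambda>x. m x a))"

definition is_loop_on :: "'b set \<Rightarrow> ('b \<Rightarrow> 'b \<Rightarrow> 'b) \<Rightarrow> 'b \<Rightarrow> bool" where
  "is_loop_on L m e \<longleftrightarrow> e \<in> L \<and> (\<forall>x\<in>L. \<forall>y\<in>L. m x y \<in> L)
     \<and> (\<forall>x\<in>L. m e x = x \<and> m x e = x)
     \<and> (\<forall>a\<in>L. bij_betw (\<lambda>x. m a x) L L) \<and> (\<forall>a\<in>L. bij_betw (\<lambda>x. m x a) L L)"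

definition moufang :: "('a \<Rightarrow> 'a \<Rightarrow> 'a) \<Rightarrow> 'a \<Rightarrow> bool" where
  "moufang m e \<longleftrightarrow> is_loop m e \<and>
     (\<forall>x y z. m (m x y) (m z x) = m (m x (m y z)) x)"

definition ldiv :: "('a \<Rightarrow> 'a \<Rightarrow> 'a) \<Rightarrow> 'a \<Rightarrow> 'a \<Rightarrow> 'a" where
  "ldiv m a b = (THE x. m a x = b)"

definition rdiv :: "('a \<Rightarrow> 'a \<Rightarrow> 'a) \<Rightarrow> 'a \<Rightarrow> 'a \<Rightarrow> 'a" where
  "rdiv m b a = (THE x. m x a = b)"

text \<open>Powers x^n = x (x (... x)); in a power associative loop the bracketing is irrelevant.\<close>

primrec lpow :: "('a \<Rightarrow> 'a \<Rightarrow> 'a) \<Rightarrow> 'a \<Rightarrow> 'a \<Rightarrow> nat \<Rightarrow> 'a" where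
  "lpow m e x 0 = e"
| "lpow m e x (Suc n) = m x (lpow m e x n)"

definition divisible :: "('a \<Rightarrow> 'a \<Rightarrow> 'a) \<Rightarrow> 'a \<Rightarrow> nat \<Rightarrow> bool" where
  "divisible m e d \<longleftrightarrow> (\<forall>y. \<exists>x. lpow m e x d = y)"

text \<open>Normal subloop: kernel of a loop homomorphism. Every homomorphic image of Q
  has cardinality at most that of Q, so it suffices to consider target loops
  carried by a subset of the type 'a.\<close>

definition normal_subloop :: "('a \<Rightarrow> 'a \<Rightarrow> 'a) \<Rightarrow> 'a \<Rightarrow> 'a set \<Rightarrow> bool" where
  "normal_subloop m e X \<longleftrightarrow>
     (\<exists>(L::'a set) m' e' f. is_loop_on L m' e' \<and> (\<forall>x. f x \<in> L)
        \<and> (\<forall>x y. f (m x y) = m' (f x) (f y))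
        \<and> X = {x. f x = e'})"

definition comm_group_sub :: "('a \<Rightarrow> 'a \<Rightarrow> 'a) \<Rightarrow> 'a set \<Rightarrow> bool" where
  "comm_group_sub m X \<longleftrightarrow> (\<forall>x\<in>X. \<forall>y\<in>X. m x y = m y x)
     \<and> (\<forall>x\<in>X. \<forall>y\<in>X. \<forall>z\<in>X. m (m x y) z = m x (m y z))"

definition divisible_on :: "('a \<Rightarrow> 'a \<Rightarrow> 'a) \<Rightarrow> 'a \<Rightarrow> 'a set \<Rightarrow> nat \<Rightarrow> bool" where
  "divisible_on m e X d \<longleftrightarrow> (\<forall>y\<in>X. \<exists>x\<in>X. lpow m e x d = y)"

definition induced_cong :: "('a \<Rightarrow> 'a \<Rightarrow> 'a) \<Rightarrow> 'a set \<Rightarrow> ('a \<times> 'a) set" where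
  "induced_cong m X = {(a, b). \<exists>x\<in>X. b = m a x}"

datatype 'v lterm = LVar 'v | LOne | LMul "'v lterm" "'v lterm"
  | LLdiv "'v lterm" "'v lterm" | LRdiv "'v lterm" "'v lterm"

primrec leval :: "('a \<Rightarrow> 'a \<Rightarrow> 'a) \<Rightarrow> 'a \<Rightarrow> ('v \<Rightarrow> 'a) \<Rightarrow> 'v lterm \<Rightarrow> 'a" where
  "leval m e \<rho> (LVar v) = \<rho> v"
| "leval m e \<rho> LOne = e"
| "leval m e \<rho> (LMul s t) = m (leval m e \<rho> s) (leval m e \<rho> t)"
| "leval m e \<rho> (LLdiv s t) = ldiv m (leval m e \<rho> s) (leval m e \<rho> t)"
| "leval m e \<rho> (LRdiv s t) = rdiv m (leval m e \<rho> s) (leval m e \<rho> t)"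

text \<open>Freese--McKenzie: [\<alpha>,\<alpha>] is the least \<delta> with C(\<alpha>,\<alpha>;\<delta>) (term condition).
  Thus [\<alpha>,\<alpha>] = 0 iff C(\<alpha>,\<alpha>;0): for every term t(x,y) and tuples a \<alpha> b, c \<alpha> d,
  t(a,c) = t(a,d) implies t(b,c) = t(b,d). Variables Inl i are the x's, Inr i the y's.\<close>

definition abelian_cong :: "('a \<Rightarrow> 'a \<Rightarrow> 'a) \<Rightarrow> 'a \<Rightarrow> ('a \<times> 'a) set \<Rightarrow> bool" where
  "abelian_cong m e \<alpha> \<longleftrightarrow>
     (\<forall>(t::(nat + nat) lterm) a b c d.
        (\<forall>i. (a i, b i) \<in> \<alpha>) \<longrightarrow> (\<forall>i. (c i, d i) \<in> \<alpha>) \<longrightarrow>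
        leval m e (case_sum a c) t = leval m e (case_sum a d) t \<longrightarrow>
        leval m e (case_sum b c) t = leval m e (case_sum b d) t)"

end

theory Submission
  imports Defs
begin

text \<open>
  Write \<open>T\<^sub>s u = s\<^sup>-\<^sup>1(us)\<close>. In a Moufang loop \<open>T\<^sub>s\<close> is a pseudo-automorphism with
  companion \<open>s\<^sup>-\<^sup>3\<close>. As every element is a cube, for each \<open>c\<close> the operation
  \<open>u \<star> v = (u(vc))c\<^sup>-\<^sup>1\<close> is, on \<open>X\<close>, the group operation of \<open>X\<close> transported along some \<open>T\<^sub>s\<close>;
  it is commutative, associative, satisfies \<open>u \<star> u = uu\<close> and \<open>u \<star> (v \<star> u) = (uv)u\<close>, and
  therefore equals the multiplication of the 2-divisible group \<open>X\<close>. So \<open>x(yc) = (xy)c\<close> for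
  \<open>x, y \<in> X\<close>, and by duality and conjugation \<open>X\<close> associates with \<open>X\<close> and any third element
  in every position.

  Consequently \<open>(px)(qy) = (pq)(\<phi>(x)\<psi>(y))\<close> and \<open>(px)\<^sup>-\<^sup>1 = p\<^sup>-\<^sup>1 T\<^bsub>p\<^sup>-\<^sup>1\<^esub>(x\<^sup>-\<^sup>1)\<close> for
  \<open>x, y \<in> X\<close>, where \<open>\<phi>, \<psi>\<close> are products of translations, hence third components of
  autotopies, hence semi-automorphisms, hence automorphisms of the 2-divisible abelian group
  \<open>X\<close>. By induction every term satisfies \<open>t(\<sigma>\<tau>) = t(\<sigma>) D(\<tau>)\<close> for \<open>X\<close>-valued \<open>\<tau>\<close>, with
  \<open>D\<close> a homomorphism; this is the term condition \<open>C(\<alpha>, \<alpha>; 0)\<close>.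
\<close>

section \<open>Moufang loops\<close>

locale moufang_loop =
  fixes m :: "'a \<Rightarrow> 'a \<Rightarrow> 'a" (infixl "\<cdot>" 70) and e :: 'a
  assumes moufang: "moufang m e"
begin

lemma left_id [simp]: "e \<cdot> x = x"
  and right_id [simp]: "x \<cdot> e = x"
  using moufang unfolding moufang_def is_loop_def by blast+

lemma left_cancel [simp]: "a \<cdot> x = a \<cdot> y \<longleftrightarrow> x = y"
  and right_cancel [simp]: "x \<cdot> a = y \<cdot> a \<longleftrightarrow> x = y"
  using moufang unfolding moufang_def is_loop_def bij_def inj_def by blast+

lemma moufang_identity: "(x \<cdot> y) \<cdot> (z \<cdot> x) = (x \<cdot> (y \<cdot> z)) \<cdot> x"
  using moufang unfolding moufang_def by blast

lemma flexible: "(x \<cdot> y) \<cdot> x = x \<cdot> (y \<cdot> x)"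
  using moufang_identity[of x e y] by simp

lemma moufang_identity': "(x \<cdot> y) \<cdot> (z \<cdot> x) = x \<cdot> ((y \<cdot> z) \<cdot> x)"
  by (simp add: moufang_identity flexible)

lemma mult_ldiv: "a \<cdot> ldiv m a b = b"
proof -
  have "surj (\<lambda>x. a \<cdot> x)"
    using moufang unfolding moufang_def is_loop_def bij_def by blast
  then have "\<exists>!x. a \<cdot> x = b" by (metis left_cancel surj_def)
  then show ?thesis unfolding ldiv_def by (rule theI')
qed

definition inv :: "'a \<Rightarrow> 'a" where
  "inv x = ldiv m x e"

lemma mult_inv [simp]: "x \<cdot> inv x = e"
  unfolding inv_def by (rule mult_ldiv)

lemma inv_mult_cancel [simp]: "inv x \<cdot> (x \<cdot> y) = y"
proof -
  have "x \<cdot> (y \<cdot> x) = x \<cdot> ((inv x \<cdot> (x \<cdot> y)) \<cdot> x)"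
    using moufang_identity'[of x "inv x" "x \<cdot> y"] by (simp add: flexible)
  then show ?thesis by simp
qed

lemma inv_mult [simp]: "inv x \<cdot> x = e"
  using flexible[of "inv x" x] by (metis inv_mult_cancel left_id right_cancel)

lemma inv_inv [simp]: "inv (inv x) = x"
  using mult_inv[of "inv x"] inv_mult[of x] by (metis left_cancel)

lemma mult_inv_cancel [simp]: "x \<cdot> (inv x \<cdot> y) = y"
  using inv_mult_cancel[of "inv x" y] by simp

lemma mult_cancel_inv [simp]: "(y \<cdot> x) \<cdot> inv x = y"
proof -
  have "(x \<cdot> y) \<cdot> x = (x \<cdot> ((y \<cdot> x) \<cdot> inv x)) \<cdot> x"
    using moufang_identity[of x "y \<cdot> x" "inv x"] by (simp add: flexible)
  then show ?thesis by simp
qed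

lemma mult_inv_cancel' [simp]: "(y \<cdot> inv x) \<cdot> x = y"
  using mult_cancel_inv[of y "inv x"] by simp

lemma ldiv_eq: "ldiv m a b = inv a \<cdot> b"
  unfolding ldiv_def by (rule the_equality) auto

lemma rdiv_eq: "rdiv m b a = b \<cdot> inv a"
  unfolding rdiv_def by (rule the_equality) auto

lemma inv_distrib: "inv (x \<cdot> y) = inv y \<cdot> inv x"
proof -
  have "inv (x \<cdot> y) \<cdot> x = inv y"
    using inv_mult_cancel[of "x \<cdot> y" "inv y"] by (simp add: flexible)
  then show ?thesis by (metis mult_cancel_inv)
qed

lemma left_alternative: "(x \<cdot> x) \<cdot> y = x \<cdot> (x \<cdot> y)"
  using moufang_identity'[of x x "y \<cdot> inv x"] by (simp add: flexible)

lemma left_moufang: "((x \<cdot> y) \<cdot> x) \<cdot> z = x \<cdot> (y \<cdot> (x \<cdot> z))"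
proof -
  have "(x \<cdot> (y \<cdot> (x \<cdot> z))) \<cdot> (inv (x \<cdot> z) \<cdot> x) = (x \<cdot> y) \<cdot> x"
    using moufang_identity'[of x "y \<cdot> (x \<cdot> z)" "inv (x \<cdot> z)"] by (simp add: flexible)
  then have "x \<cdot> (y \<cdot> (x \<cdot> z)) = ((x \<cdot> y) \<cdot> x) \<cdot> inv (inv (x \<cdot> z) \<cdot> x)"
    by (metis mult_cancel_inv)
  then show ?thesis by (simp add: inv_distrib)
qed

lemma right_moufang: "z \<cdot> (x \<cdot> (y \<cdot> x)) = ((z \<cdot> x) \<cdot> y) \<cdot> x"
proof -
  have "(x \<cdot> inv (z \<cdot> x)) \<cdot> (((z \<cdot> x) \<cdot> y) \<cdot> x) = (x \<cdot> y) \<cdot> x"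
    using moufang_identity[of x "inv (z \<cdot> x)" "(z \<cdot> x) \<cdot> y"] by simp
  then have "((z \<cdot> x) \<cdot> y) \<cdot> x = inv (x \<cdot> inv (z \<cdot> x)) \<cdot> ((x \<cdot> y) \<cdot> x)"
    by (metis inv_mult_cancel)
  then show ?thesis by (simp add: inv_distrib flexible)
qed

lemma right_moufang': "(v \<cdot> y) \<cdot> x = (v \<cdot> inv x) \<cdot> (x \<cdot> (y \<cdot> x))"
  using right_moufang[of "v \<cdot> inv x" x y] by simp

lemma left_moufang': "inv x \<cdot> (v \<cdot> z) = (inv x \<cdot> (v \<cdot> inv x)) \<cdot> (x \<cdot> z)"
  using left_moufang[of x "inv x \<cdot> (v \<cdot> inv x)" z] by simp

definition conjugate :: "'a \<Rightarrow> 'a \<Rightarrow> 'a" where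
  "conjugate s u = inv s \<cdot> (u \<cdot> s)"

lemma conjugate_flexible: "conjugate s u = (inv s \<cdot> u) \<cdot> s"
  unfolding conjugate_def by (metis flexible mult_inv_cancel inv_mult_cancel)

text \<open>
  The Moufang laws make \<open>(R\<^sub>s\<^sup>-\<^sup>1, L\<^sub>sR\<^sub>s, R\<^sub>s)\<close> and \<open>(L\<^sub>s\<^sup>-\<^sup>1R\<^sub>s\<^sup>-\<^sup>1, L\<^sub>s, L\<^sub>s\<^sup>-\<^sup>1)\<close> autotopies;
  the companion \<open>s\<^sup>-\<^sup>3\<close> enters through \<open>R\<^bsub>s\<^sup>3\<^esub> = R\<^sub>s\<^sup>3\<close> and \<open>L\<^bsub>s\<^sup>3\<^esub> = L\<^sub>s\<^sup>3\<close>.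
\<close>

lemma pseudo_automorphism:
  "conjugate s u \<cdot> (conjugate s v \<cdot> inv (s \<cdot> (s \<cdot> s))) = conjugate s (u \<cdot> v) \<cdot> inv (s \<cdot> (s \<cdot> s))"
proof -
  define t where "t = s \<cdot> (s \<cdot> s)"
  define x where "x = inv s \<cdot> ((u \<cdot> inv s) \<cdot> inv s)"
  define y where "y = s \<cdot> (s \<cdot> (v \<cdot> s))"
  have "conjugate s (u \<cdot> v) = x \<cdot> y"
    unfolding conjugate_def x_def y_def
    using right_moufang'[of u v s] left_moufang'[of s "u \<cdot> inv s" "s \<cdot> (v \<cdot> s)"] by simp
  moreover have "x \<cdot> t = conjugate s u"
  proof -
    have "x \<cdot> t = ((x \<cdot> s) \<cdot> s) \<cdot> s"
      unfolding t_def using right_moufang[of x s s] by (simp add: flexible)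
    also have "x \<cdot> s = inv s \<cdot> (u \<cdot> inv s)"
      unfolding x_def using conjugate_flexible[of s "(u \<cdot> inv s) \<cdot> inv s"]
      by (simp add: conjugate_def)
    finally show ?thesis
      using conjugate_flexible[of s "u \<cdot> inv s"] conjugate_flexible[of s u]
      by (simp add: conjugate_def)
  qed
  moreover have "inv t \<cdot> (y \<cdot> inv t) = conjugate s v \<cdot> inv t"
  proof -
    have "y = t \<cdot> conjugate s v"
      unfolding y_def t_def conjugate_def using left_moufang[of s s] by (simp add: flexible)
    then show ?thesis using flexible[of "inv t" "t \<cdot> conjugate s v"] by simp
  qed
  ultimately show ?thesis
    using right_moufang'[of x y "inv t"] unfolding t_def by simp
qed

text \<open>
  By \<open>mult_chi\<close>, \<open>chi p x\<close> is the inner map \<open>L\<^bsub>px\<^esub>\<^sup>-\<^sup>1 L\<^sub>p L\<^sub>x\<close>; the point of the definition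
  is a formula in which \<open>px\<close> no longer appears as a left multiplier.
\<close>

definition chi :: "'a \<Rightarrow> 'a \<Rightarrow> 'a \<Rightarrow> 'a" where
  "chi p x u = inv p \<cdot> ((p \<cdot> (u \<cdot> inv x)) \<cdot> x)"

lemma mult_chi: "(p \<cdot> x) \<cdot> chi p x u = p \<cdot> (x \<cdot> u)"
proof -
  have "p \<cdot> x = (p \<cdot> (x \<cdot> inv p)) \<cdot> p"
    by (simp add: flexible)
  then have "(p \<cdot> x) \<cdot> chi p x u = p \<cdot> ((x \<cdot> inv p) \<cdot> (p \<cdot> chi p x u))"
    by (simp add: left_moufang)
  also have "p \<cdot> chi p x u = (p \<cdot> inv x) \<cdot> (x \<cdot> u)"
    unfolding chi_def using right_moufang'[of p "u \<cdot> inv x" x] by simp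
  also have "x \<cdot> inv p = inv (p \<cdot> inv x)"
    by (simp add: inv_distrib)
  finally show ?thesis by simp
qed

definition autotopic :: "('a \<Rightarrow> 'a) \<Rightarrow> bool" where
  "autotopic \<gamma> \<longleftrightarrow> (\<exists>\<alpha> \<beta>. \<forall>v w. \<alpha> v \<cdot> \<beta> w = \<gamma> (v \<cdot> w))"

lemma autotopic_comp: "autotopic \<gamma> \<Longrightarrow> autotopic \<gamma>' \<Longrightarrow> autotopic (\<gamma> \<circ> \<gamma>')"
  unfolding autotopic_def by (metis comp_apply)

lemma autotopic_left_mult: "autotopic (\<lambda>w. a \<cdot> w)"
  unfolding autotopic_def using left_moufang[of a]
  by (intro exI[of _ "\<lambda>v. (a \<cdot> v) \<cdot> a"] exI[of _ "\<lambda>w. inv a \<cdot> w"]) simp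

lemma autotopic_right_mult: "autotopic (\<lambda>v. v \<cdot> a)"
  unfolding autotopic_def using right_moufang'[where x = a]
  by (intro exI[of _ "\<lambda>v. v \<cdot> inv a"] exI[of _ "\<lambda>w. a \<cdot> (w \<cdot> a)"]) simp

lemma autotopic_semi_automorphism:
  assumes "autotopic \<gamma>" and "\<gamma> e = e"
  shows "\<gamma> (v \<cdot> (w \<cdot> v)) = (\<gamma> v \<cdot> \<gamma> w) \<cdot> \<gamma> v"
proof -
  obtain \<alpha> \<beta> where atp: "\<And>v w. \<alpha> v \<cdot> \<beta> w = \<gamma> (v \<cdot> w)"
    using assms(1) unfolding autotopic_def by blast
  define c where "c = \<beta> e"
  have \<alpha>: "\<alpha> x = \<gamma> x \<cdot> inv c" for x
    using atp[of x e] unfolding c_def by (metis mult_cancel_inv right_id)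
  have \<beta>: "\<beta> y = c \<cdot> \<gamma> y" for y
    using atp[of e y] \<alpha>[of e] assms(2) by (metis left_id mult_inv_cancel)
  have "\<gamma> (v \<cdot> (w \<cdot> v)) = (\<gamma> v \<cdot> inv c) \<cdot> (c \<cdot> ((\<gamma> w \<cdot> inv c) \<cdot> (c \<cdot> \<gamma> v)))"
    by (simp flip: atp add: \<alpha> \<beta>)
  also have "c \<cdot> ((\<gamma> w \<cdot> inv c) \<cdot> (c \<cdot> \<gamma> v)) = (c \<cdot> \<gamma> w) \<cdot> \<gamma> v"
    using left_moufang[of c "\<gamma> w \<cdot> inv c" "\<gamma> v"] by (simp add: flexible)
  also have "(\<gamma> v \<cdot> inv c) \<cdot> ((c \<cdot> \<gamma> w) \<cdot> \<gamma> v) = (\<gamma> v \<cdot> \<gamma> w) \<cdot> \<gamma> v"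
    using moufang_identity'[of "\<gamma> v" "inv c" "c \<cdot> \<gamma> w"] by (simp add: flexible)
  finally show ?thesis .
qed

lemma moufang_loop_opposite: "moufang_loop (\<lambda>x y. y \<cdot> x) e"
  using moufang moufang_identity' unfolding moufang_loop_def moufang_def is_loop_def by simp

lemma inv_opposite: "moufang_loop.inv (\<lambda>x y. y \<cdot> x) e = inv"
proof
  fix x
  show "moufang_loop.inv (\<lambda>x y. y \<cdot> x) e x = inv x"
    unfolding moufang_loop.inv_def[OF moufang_loop_opposite] ldiv_def
    by (rule the_equality) (simp, metis inv_mult right_cancel)
qed

end

section \<open>Divisible abelian subloops closed under conjugation\<close>

locale divisible_abelian_subloop = moufang_loop +
  fixes X :: "'a set"
  assumes mult_closed: "x \<in> X \<Longrightarrow> y \<in> X \<Longrightarrow> x \<cdot> y \<in> X"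
    and commute: "x \<in> X \<Longrightarrow> y \<in> X \<Longrightarrow> x \<cdot> y = y \<cdot> x"
    and assoc: "x \<in> X \<Longrightarrow> y \<in> X \<Longrightarrow> z \<in> X \<Longrightarrow> (x \<cdot> y) \<cdot> z = x \<cdot> (y \<cdot> z)"
    and conjugate_closed: "u \<in> X \<Longrightarrow> conjugate s u \<in> X"
    and conjugate_inv_closed: "w \<in> X \<Longrightarrow> (s \<cdot> w) \<cdot> inv s \<in> X"
    and square_root: "z \<in> X \<Longrightarrow> \<exists>u\<in>X. u \<cdot> u = z"
    and cube_root: "\<exists>s. s \<cdot> (s \<cdot> s) = z"
begin

lemma conjugate_surj:
  assumes "w \<in> X"
  shows "\<exists>a\<in>X. conjugate s a = w"
proof
  show "(s \<cdot> w) \<cdot> inv s \<in> X"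
    using assms by (rule conjugate_inv_closed)
  show "conjugate s ((s \<cdot> w) \<cdot> inv s) = w"
    by (simp add: conjugate_def)
qed

lemma mult_interchange:
  assumes "a \<in> X" "b \<in> X" "c \<in> X" "d \<in> X"
  shows "(a \<cdot> b) \<cdot> (c \<cdot> d) = (a \<cdot> c) \<cdot> (b \<cdot> d)"
  using assms by (metis assoc commute mult_closed)

lemma operation_eq_mult:
  fixes star :: "'a \<Rightarrow> 'a \<Rightarrow> 'a" (infixl "\<star>" 70)
  assumes star_commute: "\<And>u v. u \<in> X \<Longrightarrow> v \<in> X \<Longrightarrow> u \<star> v = v \<star> u"
    and star_assoc: "\<And>u v w. u \<in> X \<Longrightarrow> v \<in> X \<Longrightarrow> w \<in> X \<Longrightarrow> (u \<star> v) \<star> w = u \<star> (v \<star> w)"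
    and star_square: "\<And>u. u \<in> X \<Longrightarrow> u \<star> u = u \<cdot> u"
    and star_moufang: "\<And>u v. u \<in> X \<Longrightarrow> v \<in> X \<Longrightarrow> u \<star> (v \<star> u) = (u \<cdot> v) \<cdot> u"
    and x: "x \<in> X" and y: "y \<in> X"
  shows "x \<star> y = x \<cdot> y"
proof -
  obtain u where u: "u \<in> X" "u \<cdot> u = x"
    using square_root x by blast
  have "x \<star> y = (u \<star> u) \<star> y"
    using u star_square by simp
  also have "\<dots> = u \<star> (y \<star> u)"
    using u y star_assoc star_commute by simp
  also have "\<dots> = (u \<cdot> y) \<cdot> u"
    using u y star_moufang by simp
  also have "\<dots> = x \<cdot> y"
    using u y assoc commute by metis
  finally show ?thesis .
qed

lemma assoc_XXQ:
  assumes x: "x \<in> X" and y: "y \<in> X"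
  shows "x \<cdot> (y \<cdot> c) = (x \<cdot> y) \<cdot> c"
proof -
  obtain s where "s \<cdot> (s \<cdot> s) = inv c"
    using cube_root by blast
  then have c: "c = inv (s \<cdot> (s \<cdot> s))"
    by (metis inv_inv)
  define star (infixl "\<star>" 70) where "u \<star> v = (u \<cdot> (v \<cdot> c)) \<cdot> inv c" for u v
  have star_c: "(u \<star> v) \<cdot> c = u \<cdot> (v \<cdot> c)" for u v
    unfolding star_def by simp
  have star_conjugate: "conjugate s a \<star> conjugate s b = conjugate s (a \<cdot> b)" for a b
    unfolding star_def c using pseudo_automorphism by simp
  have "x \<star> y = x \<cdot> y"
  proof (rule operation_eq_mult[OF _ _ _ _ x y])
    show "u \<star> v = v \<star> u" if "u \<in> X" "v \<in> X" for u v
      using conjugate_surj[OF that(1)] conjugate_surj[OF that(2)]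
      by (metis commute star_conjugate)
    show "(u \<star> v) \<star> w = u \<star> (v \<star> w)" if "u \<in> X" "v \<in> X" "w \<in> X" for u v w
      using conjugate_surj[OF that(1)] conjugate_surj[OF that(2)] conjugate_surj[OF that(3)]
      by (metis assoc star_conjugate)
    show "u \<star> u = u \<cdot> u" for u
      unfolding star_def by (simp flip: left_alternative)
    show "u \<star> (v \<star> u) = (u \<cdot> v) \<cdot> u" for u v
      using star_c[of u "v \<star> u"] star_c[of v u] left_moufang[of u v c] by (metis right_cancel)
  qed
  then show ?thesis
    using star_c by metis
qed

lemma assoc_QXX:
  assumes "x \<in> X" and "y \<in> X"
  shows "(c \<cdot> x) \<cdot> y = c \<cdot> (x \<cdot> y)"
proof -
  interpret opp: divisible_abelian_subloop "\<lambda>x y. y \<cdot> x" e X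
  proof
    show "moufang (\<lambda>x y. y \<cdot> x) e"
      using moufang_loop_opposite unfolding moufang_loop_def .
    show "y \<cdot> x \<in> X" "y \<cdot> x = x \<cdot> y" if "x \<in> X" "y \<in> X" for x y
      using that mult_closed commute by auto
    show "z \<cdot> (y \<cdot> x) = (z \<cdot> y) \<cdot> x" if "x \<in> X" "y \<in> X" "z \<in> X" for x y z
      using that assoc by simp
    show "moufang_loop.conjugate (\<lambda>x y. y \<cdot> x) e s u \<in> X" if "u \<in> X" for s u
      using conjugate_inv_closed[OF that]
      by (simp add: moufang_loop.conjugate_def[OF moufang_loop_opposite] inv_opposite)
    show "moufang_loop.inv (\<lambda>x y. y \<cdot> x) e s \<cdot> (w \<cdot> s) \<in> X" if "w \<in> X" for s w
      using conjugate_closed[OF that] by (simp add: inv_opposite conjugate_def)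
    show "\<exists>u\<in>X. u \<cdot> u = z" if "z \<in> X" for z
      using square_root[OF that] .
    show "\<exists>s. (s \<cdot> s) \<cdot> s = z" for z
      using cube_root[of z] by (simp add: flexible)
  qed
  show ?thesis
    using opp.assoc_XXQ[OF assms(2,1)] by simp
qed

lemma conjugate_hom:
  assumes "u \<in> X" and "v \<in> X"
  shows "conjugate s (u \<cdot> v) = conjugate s u \<cdot> conjugate s v"
  using pseudo_automorphism[of s u v] assoc_XXQ[OF conjugate_closed conjugate_closed] assms
  by simp

lemma assoc_XQX:
  assumes x: "x \<in> X" and y: "y \<in> X"
  shows "x \<cdot> (s \<cdot> y) = (x \<cdot> s) \<cdot> y"
proof -
  define y' where "y' = (s \<cdot> y) \<cdot> inv s"
  have y': "y' \<in> X" "y' \<cdot> s = s \<cdot> y" "conjugate s y' = y"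
    unfolding y'_def by (simp_all add: conjugate_inv_closed y conjugate_def)
  have "x \<cdot> (s \<cdot> y) = (x \<cdot> y') \<cdot> s"
    using assoc_XXQ[OF x y'(1), of s] y'(2) by simp
  also have "\<dots> = s \<cdot> (conjugate s x \<cdot> y)"
    using conjugate_hom[OF x y'(1)] y'(3) unfolding conjugate_def by (metis mult_inv_cancel)
  also have "\<dots> = (s \<cdot> conjugate s x) \<cdot> y"
    using assoc_QXX conjugate_closed x y by metis
  also have "s \<cdot> conjugate s x = x \<cdot> s"
    by (simp add: conjugate_def)
  finally show ?thesis .
qed

definition endo :: "('a \<Rightarrow> 'a) \<Rightarrow> bool" where
  "endo g \<longleftrightarrow> (\<forall>x\<in>X. g x \<in> X) \<and> (\<forall>x\<in>X. \<forall>y\<in>X. g (x \<cdot> y) = g x \<cdot> g y)"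

lemma endo_conjugate: "endo (conjugate s)"
  unfolding endo_def using conjugate_closed conjugate_hom by blast

lemma endo_autotopic:
  assumes "autotopic \<gamma>" and "\<gamma> e = e" and closed: "\<And>x. x \<in> X \<Longrightarrow> \<gamma> x \<in> X"
  shows "endo \<gamma>"
  unfolding endo_def
proof (intro conjI ballI closed)
  fix x y assume x: "x \<in> X" and y: "y \<in> X"
  have semi: "\<gamma> (v \<cdot> (w \<cdot> v)) = (\<gamma> v \<cdot> \<gamma> w) \<cdot> \<gamma> v" for v w
    using autotopic_semi_automorphism assms(1,2) .
  obtain u where u: "u \<in> X" "u \<cdot> u = x"
    using square_root x by blast
  have "x \<cdot> y = u \<cdot> (y \<cdot> u)"
    using u y assoc commute by metis
  then have "\<gamma> (x \<cdot> y) = (\<gamma> u \<cdot> \<gamma> y) \<cdot> \<gamma> u"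
    using semi by simp
  also have "\<dots> = (\<gamma> u \<cdot> \<gamma> u) \<cdot> \<gamma> y"
    using closed u y assoc commute by metis
  also have "\<gamma> u \<cdot> \<gamma> u = \<gamma> x"
    using semi[of u e] u assms(2) by simp
  finally show "\<gamma> (x \<cdot> y) = \<gamma> x \<cdot> \<gamma> y" .
qed

end

section \<open>Abelian normal subloops\<close>

lemma is_loop_on_idempotent:
  assumes "is_loop_on L m e" and "a \<in> L" and "m a a = a"
  shows "a = e"
proof -
  have "e \<in> L" and "m a e = a" and "inj_on (m a) L"
    using assms unfolding is_loop_on_def bij_betw_def by auto
  then show ?thesis
    using assms(2,3) by (metis inj_onD)
qed

locale normal_kernel = moufang_loop +
  fixes h :: "'a \<Rightarrow> 'b" and m' :: "'b \<Rightarrow> 'b \<Rightarrow> 'b" and X :: "'a set"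
  assumes hom: "h (x \<cdot> y) = m' (h x) (h y)"
    and kernel: "X = {x. h x = h e}"
begin

lemma in_kernel_iff: "x \<in> X \<longleftrightarrow> h x = h e"
  using kernel by blast

lemma h_mult_kernel_right: "x \<in> X \<Longrightarrow> h (a \<cdot> x) = h a"
  by (metis hom in_kernel_iff right_id)

lemma h_mult_kernel_left: "x \<in> X \<Longrightarrow> h (x \<cdot> a) = h a"
  by (metis hom in_kernel_iff left_id)

lemma inv_mult_in_kernel: "h a = h b \<Longrightarrow> inv a \<cdot> b \<in> X"
  by (metis hom inv_mult in_kernel_iff)

lemma mult_inv_in_kernel: "h a = h b \<Longrightarrow> a \<cdot> inv b \<in> X"
  by (metis hom mult_inv in_kernel_iff)

lemma one_in_kernel: "e \<in> X"
  by (simp add: in_kernel_iff)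

lemma inv_in_kernel: "x \<in> X \<Longrightarrow> inv x \<in> X"
  using inv_mult_in_kernel[of x e] by (simp add: in_kernel_iff)

end

locale abelian_normal_kernel = normal_kernel +
  assumes comm_group: "comm_group_sub m X"
    and divisible_kernel: "divisible_on m e X 2"
    and divisible_loop: "divisible m e 3"

sublocale abelian_normal_kernel \<subseteq> divisible_abelian_subloop m e X
proof
  show "x \<cdot> y \<in> X" if "x \<in> X" "y \<in> X" for x y
    using that by (simp add: in_kernel_iff h_mult_kernel_left)
  show "x \<cdot> y = y \<cdot> x" if "x \<in> X" "y \<in> X" for x y
    using that comm_group unfolding comm_group_sub_def by blast
  show "(x \<cdot> y) \<cdot> z = x \<cdot> (y \<cdot> z)" if "x \<in> X" "y \<in> X" "z \<in> X" for x y z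
    using that comm_group unfolding comm_group_sub_def by blast
  show "conjugate s u \<in> X" if "u \<in> X" for s u
    unfolding conjugate_def using that by (simp add: inv_mult_in_kernel h_mult_kernel_left)
  show "(s \<cdot> w) \<cdot> inv s \<in> X" if "w \<in> X" for s w
    using that by (simp add: mult_inv_in_kernel h_mult_kernel_right)
  show "\<exists>u\<in>X. u \<cdot> u = z" if "z \<in> X" for z
    using divisible_kernel that unfolding divisible_on_def by (simp add: numeral_2_eq_2)
  show "\<exists>s. s \<cdot> (s \<cdot> s) = z" for z
    using divisible_loop unfolding divisible_def by (simp add: numeral_3_eq_3)
qed

context abelian_normal_kernel
begin

definition phi :: "'a \<Rightarrow> 'a \<Rightarrow> 'a \<Rightarrow> 'a" where
  "phi p q x = inv (p \<cdot> q) \<cdot> ((p \<cdot> x) \<cdot> q)"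

definition psi :: "'a \<Rightarrow> 'a \<Rightarrow> 'a \<Rightarrow> 'a" where
  "psi p q y = inv (p \<cdot> q) \<cdot> (p \<cdot> (q \<cdot> y))"

lemma mult_phi: "(p \<cdot> q) \<cdot> phi p q x = (p \<cdot> x) \<cdot> q"
  unfolding phi_def by simp

lemma mult_psi: "(p \<cdot> q) \<cdot> psi p q y = p \<cdot> (q \<cdot> y)"
  unfolding psi_def by simp

lemma endo_phi: "endo (phi p q)"
proof (rule endo_autotopic)
  have "phi p q = (\<lambda>w. inv (p \<cdot> q) \<cdot> w) \<circ> (\<lambda>v. v \<cdot> q) \<circ> (\<lambda>w. p \<cdot> w)"
    unfolding phi_def by auto
  then show "autotopic (phi p q)"
    by (simp add: autotopic_comp autotopic_left_mult autotopic_right_mult)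
  show "phi p q e = e"
    unfolding phi_def by simp
  show "phi p q x \<in> X" if "x \<in> X" for x
    unfolding phi_def
    by (rule inv_mult_in_kernel) (use h_mult_kernel_right[OF that] in \<open>simp only: hom\<close>)
qed

lemma endo_psi: "endo (psi p q)"
proof (rule endo_autotopic)
  have "psi p q = (\<lambda>w. inv (p \<cdot> q) \<cdot> w) \<circ> (\<lambda>w. p \<cdot> w) \<circ> (\<lambda>w. q \<cdot> w)"
    unfolding psi_def by auto
  then show "autotopic (psi p q)"
    by (simp add: autotopic_comp autotopic_left_mult)
  show "psi p q e = e"
    unfolding psi_def by simp
  show "psi p q y \<in> X" if "y \<in> X" for y
    unfolding psi_def
    by (rule inv_mult_in_kernel) (use h_mult_kernel_right[OF that, of q] in \<open>simp only: hom\<close>)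
qed

lemma psi_coset:
  assumes "h u = h u'" and y: "y \<in> X"
  shows "psi a u' y = psi a u y"
proof -
  define z where "z = inv u \<cdot> u'"
  have z: "z \<in> X" "u' = u \<cdot> z"
    unfolding z_def using assms(1) by (simp_all add: inv_mult_in_kernel)
  have hom_z: "psi a u (z \<cdot> y) = psi a u z \<cdot> psi a u y"
    using endo_psi z(1) y unfolding endo_def by blast
  have "(a \<cdot> u) \<cdot> (psi a u z \<cdot> psi a u' y) = (a \<cdot> u') \<cdot> psi a u' y"
    using assoc_QXX endo_psi z y unfolding endo_def by (metis mult_psi)
  also have "\<dots> = a \<cdot> (u \<cdot> (z \<cdot> y))"
    using z y by (simp add: mult_psi assoc_QXX)
  also have "\<dots> = (a \<cdot> u) \<cdot> (psi a u z \<cdot> psi a u y)"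
    using mult_psi[of a u "z \<cdot> y"] hom_z by simp
  finally show ?thesis by simp
qed

lemma chi_shift:
  assumes x: "x \<in> X" and y: "y \<in> X"
  shows "chi p x (v \<cdot> y) = chi p x v \<cdot> y"
proof -
  define w where "w = v \<cdot> inv x"
  define s where "s = chi p x v"
  have ix: "inv x \<in> X"
    using x by (rule inv_in_kernel)
  have vy: "(v \<cdot> y) \<cdot> inv x = w \<cdot> y"
    unfolding w_def using assoc_QXX[OF y ix] assoc_QXX[OF ix y] commute[OF y ix] by simp
  have ps: "p \<cdot> s = (p \<cdot> w) \<cdot> x"
    unfolding s_def chi_def w_def by simp
  have "h s = h w"
    unfolding s_def chi_def w_def[symmetric]
    using h_mult_kernel_right[OF x, of "p \<cdot> w"] by (metis hom inv_mult_cancel)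
  have psi: "psi p w y \<in> X"
    using endo_psi y unfolding endo_def by blast
  have "chi p x (v \<cdot> y) = inv p \<cdot> ((p \<cdot> (w \<cdot> y)) \<cdot> x)"
    unfolding chi_def vy ..
  also have "(p \<cdot> (w \<cdot> y)) \<cdot> x = ((p \<cdot> w) \<cdot> x) \<cdot> psi p w y"
    using assoc_QXX[OF psi x] assoc_QXX[OF x psi] commute[OF psi x]
    by (simp flip: mult_psi[of p w y])
  also have "\<dots> = p \<cdot> (s \<cdot> y)"
    using ps psi_coset[OF \<open>h s = h w\<close> y] mult_psi[of p s y] by simp
  finally show ?thesis
    unfolding s_def by simp
qed

lemma mult_cosets:
  assumes x: "x \<in> X" and y: "y \<in> X"
  shows "(p \<cdot> x) \<cdot> (q \<cdot> y) = (p \<cdot> q) \<cdot> (phi p q x \<cdot> psi p q y)"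
proof -
  define v where "v = inv x \<cdot> (inv p \<cdot> ((p \<cdot> x) \<cdot> q))"
  have xv: "p \<cdot> (x \<cdot> v) = (p \<cdot> x) \<cdot> q"
    unfolding v_def by simp
  have "chi p x v = q"
    using mult_chi[of p x v] xv by simp
  have "h q = h (x \<cdot> v)"
  proof -
    have "h ((p \<cdot> x) \<cdot> q) = h (p \<cdot> q)"
      using h_mult_kernel_right[OF x] by (simp only: hom)
    then show ?thesis
      using xv by (metis hom inv_mult_cancel)
  qed
  have "(p \<cdot> x) \<cdot> (q \<cdot> y) = (p \<cdot> x) \<cdot> chi p x (v \<cdot> y)"
    using chi_shift[OF x y] \<open>chi p x v = q\<close> by simp
  also have "\<dots> = p \<cdot> ((x \<cdot> v) \<cdot> y)"
    using mult_chi assoc_XQX[OF x y] by simp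
  also have "\<dots> = ((p \<cdot> x) \<cdot> q) \<cdot> psi p q y"
    using mult_psi[of p "x \<cdot> v" y] xv psi_coset[OF \<open>h q = h (x \<cdot> v)\<close> y] by simp
  also have "\<dots> = (p \<cdot> q) \<cdot> (phi p q x \<cdot> psi p q y)"
  proof -
    have "phi p q x \<in> X" and "psi p q y \<in> X"
      using endo_phi endo_psi x y unfolding endo_def by blast+
    then show ?thesis
      using mult_phi[of p q x] assoc_QXX by metis
  qed
  finally show ?thesis .
qed

lemma endo_inv: "endo inv"
  unfolding endo_def using inv_in_kernel commute by (simp add: inv_distrib)

definition tuple_hom :: "(('v \<Rightarrow> 'a) \<Rightarrow> 'a) \<Rightarrow> bool" where
  "tuple_hom D \<longleftrightarrow> (\<forall>\<tau>. range \<tau> \<subseteq> X \<longrightarrow> D \<tau> \<in> X) \<and>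
     (\<forall>\<tau> \<tau>'. range \<tau> \<subseteq> X \<longrightarrow> range \<tau>' \<subseteq> X \<longrightarrow> D (\<lambda>v. \<tau> v \<cdot> \<tau>' v) = D \<tau> \<cdot> D \<tau>')"

definition affine :: "(('v \<Rightarrow> 'a) \<Rightarrow> 'a) \<Rightarrow> bool" where
  "affine F \<longleftrightarrow> (\<forall>\<sigma>. \<exists>D. tuple_hom D \<and>
     (\<forall>\<tau>. range \<tau> \<subseteq> X \<longrightarrow> F (\<lambda>v. \<sigma> v \<cdot> \<tau> v) = F \<sigma> \<cdot> D \<tau>))"

lemma tuple_hom_mult: "tuple_hom D \<Longrightarrow> tuple_hom D' \<Longrightarrow> tuple_hom (\<lambda>\<tau>. D \<tau> \<cdot> D' \<tau>)"
  unfolding tuple_hom_def by (simp add: mult_closed mult_interchange)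

lemma tuple_hom_endo: "endo g \<Longrightarrow> tuple_hom D \<Longrightarrow> tuple_hom (\<lambda>\<tau>. g (D \<tau>))"
  unfolding tuple_hom_def endo_def by simp

lemma affine_var: "affine (\<lambda>\<sigma>. \<sigma> v)"
  unfolding affine_def tuple_hom_def by (intro allI exI[of _ "\<lambda>\<tau>. \<tau> v"]) auto

lemma affine_one: "affine (\<lambda>\<sigma>. e)"
  unfolding affine_def tuple_hom_def by (intro allI exI[of _ "\<lambda>\<tau>. e"]) (simp add: one_in_kernel)

lemma affine_mult:
  assumes "affine F" and "affine G"
  shows "affine (\<lambda>\<sigma>. F \<sigma> \<cdot> G \<sigma>)"
  unfolding affine_def
proof
  fix \<sigma>
  obtain DF where DF: "tuple_hom DF" "\<And>\<tau>. range \<tau> \<subseteq> X \<Longrightarrow> F (\<lambda>v. \<sigma> v \<cdot> \<tau> v) = F \<sigma> \<cdot> DF \<tau>"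
    using assms(1) unfolding affine_def by blast
  obtain DG where DG: "tuple_hom DG" "\<And>\<tau>. range \<tau> \<subseteq> X \<Longrightarrow> G (\<lambda>v. \<sigma> v \<cdot> \<tau> v) = G \<sigma> \<cdot> DG \<tau>"
    using assms(2) unfolding affine_def by blast
  let ?D = "\<lambda>\<tau>. phi (F \<sigma>) (G \<sigma>) (DF \<tau>) \<cdot> psi (F \<sigma>) (G \<sigma>) (DG \<tau>)"
  have "tuple_hom ?D"
    using tuple_hom_mult[OF tuple_hom_endo[OF endo_phi DF(1)] tuple_hom_endo[OF endo_psi DG(1)]] .
  moreover have "F (\<lambda>v. \<sigma> v \<cdot> \<tau> v) \<cdot> G (\<lambda>v. \<sigma> v \<cdot> \<tau> v) = (F \<sigma> \<cdot> G \<sigma>) \<cdot> ?D \<tau>"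
    if "range \<tau> \<subseteq> X" for \<tau>
    using DF DG that mult_cosets unfolding tuple_hom_def by simp
  ultimately show "\<exists>D. tuple_hom D \<and> (\<forall>\<tau>. range \<tau> \<subseteq> X \<longrightarrow>
      F (\<lambda>v. \<sigma> v \<cdot> \<tau> v) \<cdot> G (\<lambda>v. \<sigma> v \<cdot> \<tau> v) = (F \<sigma> \<cdot> G \<sigma>) \<cdot> D \<tau>)"
    by blast
qed

lemma affine_inv:
  assumes "affine F"
  shows "affine (\<lambda>\<sigma>. inv (F \<sigma>))"
  unfolding affine_def
proof
  fix \<sigma>
  obtain DF where DF: "tuple_hom DF" "\<And>\<tau>. range \<tau> \<subseteq> X \<Longrightarrow> F (\<lambda>v. \<sigma> v \<cdot> \<tau> v) = F \<sigma> \<cdot> DF \<tau>"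
    using assms unfolding affine_def by blast
  let ?D = "\<lambda>\<tau>. conjugate (inv (F \<sigma>)) (inv (DF \<tau>))"
  have "tuple_hom ?D"
    using tuple_hom_endo[OF endo_conjugate tuple_hom_endo[OF endo_inv DF(1)]] .
  moreover have "inv (F (\<lambda>v. \<sigma> v \<cdot> \<tau> v)) = inv (F \<sigma>) \<cdot> ?D \<tau>" if "range \<tau> \<subseteq> X" for \<tau>
    using DF(2)[OF that] by (simp add: conjugate_def inv_distrib)
  ultimately show "\<exists>D. tuple_hom D \<and> (\<forall>\<tau>. range \<tau> \<subseteq> X \<longrightarrow>
      inv (F (\<lambda>v. \<sigma> v \<cdot> \<tau> v)) = inv (F \<sigma>) \<cdot> D \<tau>)"
    by blast
qed

lemma affine_leval: "affine (\<lambda>\<sigma>. leval m e \<sigma> t)"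
  by (induction t) (simp_all add: affine_var affine_one affine_mult affine_inv ldiv_eq rdiv_eq)

lemma abelian_cong_kernel: "abelian_cong m e (induced_cong m X)"
  unfolding abelian_cong_def
proof (intro allI impI)
  fix t :: "(nat + nat) lterm" and a b c d :: "nat \<Rightarrow> 'a"
  assume ab: "\<forall>i. (a i, b i) \<in> induced_cong m X" and cd: "\<forall>i. (c i, d i) \<in> induced_cong m X"
    and eq: "leval m e (case_sum a c) t = leval m e (case_sum a d) t"
  have "\<forall>i. \<exists>x. x \<in> X \<and> b i = a i \<cdot> x" and "\<forall>i. \<exists>y. y \<in> X \<and> d i = c i \<cdot> y"
    using ab cd unfolding induced_cong_def by blast+
  then obtain x y where x: "\<And>i. x i \<in> X \<and> b i = a i \<cdot> x i" and y: "\<And>i. y i \<in> X \<and> d i = c i \<cdot> y i"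
    by metis
  define \<sigma> where "\<sigma> = case_sum a c"
  define \<tau>1 :: "nat + nat \<Rightarrow> 'a" where "\<tau>1 = case_sum x (\<lambda>_. e)"
  define \<tau>2 :: "nat + nat \<Rightarrow> 'a" where "\<tau>2 = case_sum (\<lambda>_. e) y"
  have \<tau>: "range \<tau>1 \<subseteq> X" "range \<tau>2 \<subseteq> X" "range (\<lambda>v. \<tau>1 v \<cdot> \<tau>2 v) \<subseteq> X"
    unfolding \<tau>1_def \<tau>2_def using x y one_in_kernel mult_closed by (auto split: sum.split)
  have shift: "(\<lambda>v. \<sigma> v \<cdot> \<tau>1 v) = case_sum b c" "(\<lambda>v. \<sigma> v \<cdot> \<tau>2 v) = case_sum a d"
    "(\<lambda>v. \<sigma> v \<cdot> (\<tau>1 v \<cdot> \<tau>2 v)) = case_sum b d"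
    unfolding \<sigma>_def \<tau>1_def \<tau>2_def using x y by (auto split: sum.split)
  obtain D where D: "tuple_hom D"
    and F: "\<And>\<tau>. range \<tau> \<subseteq> X \<Longrightarrow> leval m e (\<lambda>v. \<sigma> v \<cdot> \<tau> v) t = leval m e \<sigma> t \<cdot> D \<tau>"
    using affine_leval[of t] unfolding affine_def by blast
  have "leval m e \<sigma> t \<cdot> D \<tau>2 = leval m e \<sigma> t \<cdot> e"
    using F[OF \<tau>(2)] eq unfolding shift by (simp add: \<sigma>_def)
  then have "D \<tau>2 = e"
    by (simp only: left_cancel)
  then have "D (\<lambda>v. \<tau>1 v \<cdot> \<tau>2 v) = D \<tau>1"
    using D \<tau> unfolding tuple_hom_def by simp
  then show "leval m e (case_sum b c) t = leval m e (case_sum b d) t"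
    using F[OF \<tau>(1)] F[OF \<tau>(3)] unfolding shift by simp
qed

end

theorem theorem4p3:
  fixes m :: "'a \<Rightarrow> 'a \<Rightarrow> 'a" and e :: 'a and X :: "'a set"
  assumes "moufang m e"
    and "divisible m e 3"
    and "normal_subloop m e X"
    and "comm_group_sub m X"
    and "divisible_on m e X 2"
  shows "abelian_cong m e (induced_cong m X)"
proof -
  interpret moufang_loop m e
    using assms(1) by unfold_locales
  obtain L :: "'a set" and m' e' h where L: "is_loop_on L m' e'" and "\<forall>x. h x \<in> L"
    and hom: "\<forall>x y. h (m x y) = m' (h x) (h y)" and X: "X = {x. h x = e'}"
    using assms(3) unfolding normal_subloop_def by blast
  have "h e = e'"
    using is_loop_on_idempotent[OF L] \<open>\<forall>x. h x \<in> L\<close> hom by (metis right_id)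
  interpret abelian_normal_kernel m e h m' X
    using assms hom X \<open>h e = e'\<close> by unfold_locales auto
  show ?thesis
    by (rule abelian_cong_kernel)
qed

end
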